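(* Let $d\ge1$ and let $f$ be a Boolean function that is equivalent to a depth-$d$ decision tree and satisfies ${\rm psize}(f)=t\ge1$. Then some variable $x_i$ appears in at least $\lceil t/d\rceil$ monomials of the minimal polynomial representation of $f$.
   Context: Every Boolean function has a unique representation as a sum over $\mathbb{F}_2$ of distinct monomials (products of distinct variables, the empty product being the constant $1$). ${\rm psize}(f)$ is the number of non-constant monomials in this representation. A decision tree over $x_1,\dots,x_n$ is a rooted binary tree whose internal nodes are labeled by variables, each having a 0-child and a 1-child, leaves labeled $0$ or $1$; it computes a Boolean function by following from the root the $x_i$-child at a node labeled $x_i$; depth is the maximum number of edges on a root-to-leaf path. *)

theory Defs
  imports Complex_Main
begin

text \<open>Inputs are assignments x :: nat => bool; the variables are x 0, ..., x (n-1).\<close>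

datatype dtree = Leaf bool | Node nat dtree dtree

fun dt_eval :: "dtree \<Rightarrow> (nat \<Rightarrow> bool) \<Rightarrow> bool" where
  "dt_eval (Leaf b) x = b"
| "dt_eval (Node i t0 t1) x = (if x i then dt_eval t1 x else dt_eval t0 x)"

fun dt_depth :: "dtree \<Rightarrow> nat" where
  "dt_depth (Leaf b) = 0"
| "dt_depth (Node i t0 t1) = Suc (max (dt_depth t0) (dt_depth t1))"

fun dt_vars :: "dtree \<Rightarrow> nat set" where
  "dt_vars (Leaf b) = {}"
| "dt_vars (Node i t0 t1) = insert i (dt_vars t0 \<union> dt_vars t1)"

text \<open>Value of the F2-polynomial given by a set S of monomials (a monomial = set of variables;
  the empty monomial is the constant 1).\<close>
definition poly_eval :: "nat set set \<Rightarrow> (nat \<Rightarrow> bool) \<Rightarrow> bool" where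
  "poly_eval S x = odd (card {M \<in> S. \<forall>i\<in>M. x i})"

definition anf :: "nat \<Rightarrow> ((nat \<Rightarrow> bool) \<Rightarrow> bool) \<Rightarrow> nat set set" where
  "anf n f = (THE S. S \<subseteq> Pow {..<n} \<and> (\<forall>x. f x = poly_eval S x))"

definition psize :: "nat \<Rightarrow> ((nat \<Rightarrow> bool) \<Rightarrow> bool) \<Rightarrow> nat" where
  "psize n f = card (anf n f - {{}})"

end

theory Submission
  imports Defs "HOL-Library.FuncSet"
begin

text \<open>Following the zero-edges from the root of T queries a set Z of at most d variables, and
  f is constant on every assignment vanishing on Z. By Moebius inversion over F2, a monomial M
  belongs to the representation of f iff f is true on an odd number of the subsets of M. If M is
  nonempty and disjoint from Z, f is constant on the subsets of M and this number is 0 or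
  2^|M|, so M is not a monomial of f. Hence all t nonconstant monomials meet Z, and some variable
  of Z lies in at least t/d of them.\<close>

lemma poly_eval_indicator: "poly_eval S (\<lambda>i. i \<in> A) = odd (card {N \<in> S. N \<subseteq> A})"
  unfolding poly_eval_def by (simp add: subset_eq)

lemma poly_eval_cong:
  assumes "S \<subseteq> Pow U" "\<forall>i\<in>U. x i = y i"
  shows "poly_eval S x = poly_eval S y"
proof -
  have "{M \<in> S. \<forall>i\<in>M. x i} = {M \<in> S. \<forall>i\<in>M. y i}" using assms by blast
  thus ?thesis unfolding poly_eval_def by simp
qed

lemma card_supersets_in_Pow:
  assumes "finite M" "N \<subseteq> M"
  shows "card {A \<in> Pow M. N \<subseteq> A} = 2 ^ card (M - N)"
proof -
  have "bij_betw (\<lambda>A. A - N) {A \<in> Pow M. N \<subseteq> A} (Pow (M - N))"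
    by (rule bij_betwI[where g = "\<lambda>B. B \<union> N"]) (use assms in auto)
  hence "card {A \<in> Pow M. N \<subseteq> A} = card (Pow (M - N))" by (rule bij_betw_same_card)
  thus ?thesis using assms by (simp add: card_Pow)
qed

lemma sum_card_subsets_in_Pow:
  assumes "finite M"
  shows "(\<Sum>A\<in>Pow M. card {N \<in> S. N \<subseteq> A}) = (\<Sum>N\<in>{N \<in> S. N \<subseteq> M}. 2 ^ card (M - N))"
proof -
  let ?S = "{N \<in> S. N \<subseteq> M}"
  have fin: "finite ?S" using assms by (rule finite_subset[rotated, OF finite_Pow_iff[THEN iffD2]]) auto
  have "(\<Sum>A\<in>Pow M. card {N \<in> S. N \<subseteq> A}) = (\<Sum>A\<in>Pow M. \<Sum>N\<in>?S. if N \<subseteq> A then 1 else 0)"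
  proof (rule sum.cong[OF refl])
    fix A assume "A \<in> Pow M"
    hence "{N \<in> S. N \<subseteq> A} = {N \<in> ?S. N \<subseteq> A}" by auto
    thus "card {N \<in> S. N \<subseteq> A} = (\<Sum>N\<in>?S. if N \<subseteq> A then 1 else 0)"
      using fin by (simp add: sum.If_cases Int_def conj_commute)
  qed
  also have "\<dots> = (\<Sum>N\<in>?S. \<Sum>A\<in>Pow M. if N \<subseteq> A then 1 else 0)" by (rule sum.swap)
  also have "\<dots> = (\<Sum>N\<in>?S. card {A \<in> Pow M. N \<subseteq> A})"
    using assms by (intro sum.cong refl) (simp add: sum.If_cases Int_def conj_commute)
  also have "\<dots> = (\<Sum>N\<in>?S. 2 ^ card (M - N))"
    using assms by (intro sum.cong refl card_supersets_in_Pow) auto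
  finally show ?thesis .
qed

lemma mem_iff_odd_card_true_subsets:
  assumes "finite M"
  shows "M \<in> S \<longleftrightarrow> odd (card {A \<in> Pow M. poly_eval S (\<lambda>i. i \<in> A)})"
proof -
  let ?S = "{N \<in> S. N \<subseteq> M}"
  have fin: "finite ?S" using assms by (rule finite_subset[rotated, OF finite_Pow_iff[THEN iffD2]]) auto
  have "odd (card {A \<in> Pow M. poly_eval S (\<lambda>i. i \<in> A)})
      = odd (\<Sum>A\<in>Pow M. card {N \<in> S. N \<subseteq> A})"
    using assms by (simp add: even_sum_iff poly_eval_indicator)
  also have "\<dots> = odd (\<Sum>N\<in>?S. (2::nat) ^ card (M - N))"
    using sum_card_subsets_in_Pow[OF assms] by simp
  also have "\<dots> = odd (card {N \<in> ?S. odd ((2::nat) ^ card (M - N))})"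
    using fin by (simp add: even_sum_iff)
  also have "{N \<in> ?S. odd ((2::nat) ^ card (M - N))} = {N \<in> S. N = M}"
    using assms by (auto simp: finite_subset)
  also have "odd (card {N \<in> S. N = M}) \<longleftrightarrow> M \<in> S"
    by (cases "M \<in> S") (auto simp: Collect_conv_if)
  finally show ?thesis by simp
qed

lemma poly_eval_inject:
  assumes "finite U" "S1 \<subseteq> Pow U" "S2 \<subseteq> Pow U"
    and "\<forall>A\<subseteq>U. poly_eval S1 (\<lambda>i. i \<in> A) = poly_eval S2 (\<lambda>i. i \<in> A)"
  shows "S1 = S2"
proof (rule set_eqI)
  fix M
  show "M \<in> S1 \<longleftrightarrow> M \<in> S2"
  proof (cases "M \<subseteq> U")
    case True
    hence "finite M" using assms(1) finite_subset by blast
    moreover have "{A \<in> Pow M. poly_eval S1 (\<lambda>i. i \<in> A)} = {A \<in> Pow M. poly_eval S2 (\<lambda>i. i \<in> A)}"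
      using assms(4) True by auto
    ultimately show ?thesis
      using mem_iff_odd_card_true_subsets[of M S1] mem_iff_odd_card_true_subsets[of M S2] by simp
  next
    case False
    thus ?thesis using assms(2,3) by auto
  qed
qed

text \<open>By counting: S \<mapsto> poly_eval S is an injection between two sets of size 2^(2^n).\<close>

lemma poly_eval_exists:
  assumes "\<And>x y. \<forall>i<n. x i = y i \<Longrightarrow> f x = f y"
  shows "\<exists>S. S \<subseteq> Pow {..<n} \<and> (\<forall>x. f x = poly_eval S x)"
proof -
  define U where "U = Pow {..<n::nat}"
  have fin: "finite U" unfolding U_def by simp
  define \<Phi> where "\<Phi> S = restrict (\<lambda>A. poly_eval S (\<lambda>i. i \<in> A)) U" for S
  have inj: "inj_on \<Phi> (Pow U)"
  proof (rule inj_onI)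
    fix S1 S2 assume "S1 \<in> Pow U" "S2 \<in> Pow U" and eq: "\<Phi> S1 = \<Phi> S2"
    moreover have "poly_eval S1 (\<lambda>i. i \<in> A) = poly_eval S2 (\<lambda>i. i \<in> A)" if "A \<in> U" for A
      using fun_cong[OF eq, of A] that by (simp add: \<Phi>_def)
    ultimately show "S1 = S2" by (intro poly_eval_inject[of "{..<n}"]) (auto simp: U_def)
  qed
  have into: "\<Phi> ` Pow U \<subseteq> U \<rightarrow>\<^sub>E (UNIV :: bool set)" unfolding \<Phi>_def by auto
  have "finite (U \<rightarrow>\<^sub>E (UNIV :: bool set))" by (intro finite_PiE fin) simp
  moreover have "card (\<Phi> ` Pow U) = card (U \<rightarrow>\<^sub>E (UNIV :: bool set))"
    using card_image[OF inj] fin by (simp add: card_Pow card_PiE)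
  ultimately have onto: "\<Phi> ` Pow U = U \<rightarrow>\<^sub>E (UNIV :: bool set)"
    using into by (simp add: card_subset_eq)
  have "restrict (\<lambda>A. f (\<lambda>i. i \<in> A)) U \<in> \<Phi> ` Pow U" unfolding onto by auto
  then obtain S where S: "S \<subseteq> U" "\<Phi> S = restrict (\<lambda>A. f (\<lambda>i. i \<in> A)) U"
    by auto
  have "f x = poly_eval S x" for x
  proof -
    define A where "A = {i. i < n \<and> x i}"
    have "A \<in> U" unfolding A_def U_def by auto
    have "f x = f (\<lambda>i. i \<in> A)" by (rule assms) (auto simp: A_def)
    also have "\<dots> = poly_eval S (\<lambda>i. i \<in> A)"
      using fun_cong[OF S(2), of A] \<open>A \<in> U\<close> by (simp add: \<Phi>_def)
    also have "\<dots> = poly_eval S x"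
      using S(1) by (intro poly_eval_cong[of S "{..<n}"]) (auto simp: U_def A_def)
    finally show ?thesis .
  qed
  thus ?thesis using S(1) unfolding U_def by auto
qed

lemma anf_correct:
  assumes "\<And>x y. \<forall>i<n. x i = y i \<Longrightarrow> f x = f y"
  shows "anf n f \<subseteq> Pow {..<n}" and "f x = poly_eval (anf n f) x"
proof -
  define P where "P S \<longleftrightarrow> S \<subseteq> Pow {..<n} \<and> (\<forall>x. f x = poly_eval S x)" for S
  obtain S where S: "P S" using poly_eval_exists[of n f, OF assms] unfolding P_def by blast
  have "S' = S" if "P S'" for S'
    using that S unfolding P_def by (intro poly_eval_inject[of "{..<n}"]) simp_all
  with S have "P (THE S. P S)" by (rule theI)
  moreover have "anf n f = (THE S. P S)" unfolding anf_def P_def by (rule refl)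
  ultimately have "P (anf n f)" by simp
  thus "anf n f \<subseteq> Pow {..<n}" "f x = poly_eval (anf n f) x" unfolding P_def by simp_all
qed

lemma not_mem_if_const_on_subsets:
  assumes "finite M" "M \<noteq> {}" "\<forall>A\<subseteq>M. poly_eval S (\<lambda>i. i \<in> A) = c"
  shows "M \<notin> S"
proof -
  have "{A \<in> Pow M. poly_eval S (\<lambda>i. i \<in> A)} = (if c then Pow M else {})"
    using assms(3) by auto
  moreover have "card M > 0" using assms(1,2) by (simp add: card_gt_0_iff)
  ultimately have "even (card {A \<in> Pow M. poly_eval S (\<lambda>i. i \<in> A)})"
    using assms(1) by (simp add: card_Pow)
  thus ?thesis using mem_iff_odd_card_true_subsets[OF assms(1)] by blast
qed

fun zero_path :: "dtree \<Rightarrow> nat set" where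
  "zero_path (Leaf b) = {}"
| "zero_path (Node i t0 t1) = insert i (zero_path t0)"

lemma zero_path_subset_vars: "zero_path T \<subseteq> dt_vars T"
  by (induction T) auto

lemma finite_zero_path: "finite (zero_path T)"
  by (induction T) auto

lemma card_zero_path_le_depth: "card (zero_path T) \<le> dt_depth T"
  by (induction T) (auto simp: card_insert_if finite_zero_path)

lemma dt_eval_off_zero_path:
  "\<forall>i\<in>zero_path T. \<not> x i \<Longrightarrow> dt_eval T x = dt_eval T (\<lambda>_. False)"
  by (induction T) auto

lemma dt_eval_cong: "\<forall>i\<in>dt_vars T. x i = y i \<Longrightarrow> dt_eval T x = dt_eval T y"
  by (induction T) auto

lemma dt_eval_local:
  "dt_vars T \<subseteq> {..<n} \<Longrightarrow> \<forall>i<n. x i = y i \<Longrightarrow> dt_eval T x = dt_eval T y"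
  by (intro dt_eval_cong) blast

lemma anf_dt_eval_monomial_meets_zero_path:
  assumes "dt_vars T \<subseteq> {..<n}" "M \<in> anf n (dt_eval T)" "M \<noteq> {}"
  shows "M \<inter> zero_path T \<noteq> {}"
proof
  assume disjoint: "M \<inter> zero_path T = {}"
  note local = dt_eval_local[OF assms(1)]
  have "finite M" using anf_correct(1)[of n "dt_eval T", OF local] assms(2) finite_subset by blast
  moreover have const:
    "\<forall>A\<subseteq>M. poly_eval (anf n (dt_eval T)) (\<lambda>i. i \<in> A) = dt_eval T (\<lambda>_. False)"
  proof (intro allI impI)
    fix A assume "A \<subseteq> M"
    hence "dt_eval T (\<lambda>i. i \<in> A) = dt_eval T (\<lambda>_. False)"
      using disjoint by (intro dt_eval_off_zero_path) blast
    thus "poly_eval (anf n (dt_eval T)) (\<lambda>i. i \<in> A) = dt_eval T (\<lambda>_. False)"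
      by (simp flip: anf_correct(2)[of n "dt_eval T", OF local])
  qed
  ultimately have "M \<notin> anf n (dt_eval T)"
    using not_mem_if_const_on_subsets[OF _ assms(3) const] by blast
  thus False using assms(2) by contradiction
qed

lemma exists_ge_ceiling_div_of_cover:
  assumes "finite P" "card P \<le> d" "\<forall>i\<in>P. finite (F i)" "X \<subseteq> (\<Union>i\<in>P. F i)" "X \<noteq> {}"
  shows "\<exists>i\<in>P. \<lceil>real (card X) / real d\<rceil> \<le> int (card (F i))"
proof -
  have "P \<noteq> {}" using assms(4,5) by blast
  then have "Max (card ` F ` P) \<in> card ` F ` P" using assms(1) by (intro Max_in) auto
  then obtain j where j: "j \<in> P" "card (F j) = Max (card ` F ` P)" by auto
  have max: "\<forall>i\<in>P. card (F i) \<le> card (F j)"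
    unfolding j(2) using assms(1) by (auto intro: Max_ge)
  have "card X \<le> card (\<Union>i\<in>P. F i)" using assms(1,3,4) by (intro card_mono) auto
  also have "\<dots> \<le> (\<Sum>i\<in>P. card (F i))" by (rule card_UN_le[OF assms(1)])
  also have "\<dots> \<le> card P * card (F j)" using sum_bounded_above[of P "\<lambda>i. card (F i)"] max by simp
  also have "\<dots> \<le> d * card (F j)" using assms(2) by simp
  finally have "real (card X) \<le> real d * real (card (F j))" by (simp flip: of_nat_mult)
  moreover have "d > 0" using assms(1,2) \<open>P \<noteq> {}\<close> card_gt_0_iff by fastforce
  ultimately have "real (card X) / real d \<le> real (card (F j))"
    by (simp add: pos_divide_le_eq mult.commute)
  thus ?thesis using j(1) by (auto simp: ceiling_le_iff)
qed

theorem mainTheorem19: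
  fixes n d t :: nat and f :: "(nat \<Rightarrow> bool) \<Rightarrow> bool" and T :: dtree
  assumes "d \<ge> 1"
    and "dt_vars T \<subseteq> {..<n}"
    and "dt_depth T = d"
    and "\<forall>x. f x = dt_eval T x"
    and "psize n f = t" and "t \<ge> 1"
  shows "\<exists>i<n. int (card {M \<in> anf n f. i \<in> M}) \<ge> \<lceil>real t / real d\<rceil>"
proof -
  have f: "f = dt_eval T" using assms(4) by blast
  let ?S = "anf n f"
  have "finite ?S"
    using anf_correct(1)[of n "dt_eval T", OF dt_eval_local[OF assms(2)]] f
    by (auto intro: finite_subset)
  moreover have "?S - {{}} \<subseteq> (\<Union>i\<in>zero_path T. {M \<in> ?S. i \<in> M})"
    using anf_dt_eval_monomial_meets_zero_path[OF assms(2)] f by blast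
  moreover have t: "card (?S - {{}}) = t" using assms(5) by (simp add: psize_def)
  moreover have "?S - {{}} \<noteq> {}" using assms(6) t by force
  moreover have "card (zero_path T) \<le> d" using card_zero_path_le_depth[of T] assms(3) by simp
  ultimately obtain i where "i \<in> zero_path T" "\<lceil>real t / real d\<rceil> \<le> int (card {M \<in> ?S. i \<in> M})"
    using exists_ge_ceiling_div_of_cover[OF finite_zero_path,
        where F = "\<lambda>i. {M \<in> ?S. i \<in> M}" and X = "?S - {{}}" and d = d] by auto
  thus ?thesis using zero_path_subset_vars assms(2) by blast
qed

end
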